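(* There is no commutative unitary ring $R$ with exactly three ideals such that $(Id(R),\cap,+,\otimes,\rightarrow,\{0\},R)$ is a BL-algebra which is not an MV-algebra.
   Context: For a commutative unitary ring $R$, $Id(R)$ is the set of its ideals, ordered by inclusion, with $I\cap J$, $I+J=\{i+j: i\in I, j\in J\}$, $I\otimes J=\{\sum_{k=1}^n i_kj_k: i_k\in I, j_k\in J\}$, and $I\rightarrow J=(J:I)=\{x\in R: xI\subseteq J\}$; this is a residuated lattice with bottom $\{0\}$ and top $R$. A (commutative) residuated lattice $(L,\wedge,\vee,\odot,\rightarrow,0,1)$ is a bounded lattice with a commutative ordered monoid $(L,\odot,1)$ such that $z\le x\rightarrow y$ iff $x\odot z\le y$. A BL-algebra is a residuated lattice satisfying $(x\rightarrow y)\vee(y\rightarrow x)=1$ and $x\odot(x\rightarrow y)=x\wedge y$. A BL-algebra is an MV-algebra (i.e. corresponds to an MV-algebra) when $x^{\ast\ast}=x$ for all $x$, where $x^\ast=x\rightarrow 0$. *)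

theory Defs
  imports "HOL-Algebra.Ideal_Product"
begin

definition residuated_lattice ::
  "'b set \<Rightarrow> ('b \<Rightarrow> 'b \<Rightarrow> bool) \<Rightarrow> ('b \<Rightarrow> 'b \<Rightarrow> 'b) \<Rightarrow> ('b \<Rightarrow> 'b \<Rightarrow> 'b) \<Rightarrow>
   ('b \<Rightarrow> 'b \<Rightarrow> 'b) \<Rightarrow> ('b \<Rightarrow> 'b \<Rightarrow> 'b) \<Rightarrow> 'b \<Rightarrow> 'b \<Rightarrow> bool" where
  "residuated_lattice L leq mt jn mul res bt tp \<longleftrightarrow>
     bt \<in> L \<and> tp \<in> L \<and>
     (\<forall>x\<in>L. \<forall>y\<in>L. mt x y \<in> L \<and> jn x y \<in> L \<and> mul x y \<in> L \<and> res x y \<in> L) \<and>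
     \<comment> \<open>partial order\<close>
     (\<forall>x\<in>L. leq x x) \<and>
     (\<forall>x\<in>L. \<forall>y\<in>L. leq x y \<and> leq y x \<longrightarrow> x = y) \<and>
     (\<forall>x\<in>L. \<forall>y\<in>L. \<forall>z\<in>L. leq x y \<and> leq y z \<longrightarrow> leq x z) \<and>
     \<comment> \<open>mt is the greatest lower bound, jn the least upper bound\<close>
     (\<forall>x\<in>L. \<forall>y\<in>L. leq (mt x y) x \<and> leq (mt x y) y \<and>
        (\<forall>z\<in>L. leq z x \<and> leq z y \<longrightarrow> leq z (mt x y))) \<and>
     (\<forall>x\<in>L. \<forall>y\<in>L. leq x (jn x y) \<and> leq y (jn x y) \<and>
        (\<forall>z\<in>L. leq x z \<and> leq y z \<longrightarrow> leq (jn x y) z)) \<and>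
     \<comment> \<open>bounds\<close>
     (\<forall>x\<in>L. leq bt x \<and> leq x tp) \<and>
     \<comment> \<open>commutative ordered monoid with unit tp\<close>
     (\<forall>x\<in>L. \<forall>y\<in>L. \<forall>z\<in>L. mul (mul x y) z = mul x (mul y z)) \<and>
     (\<forall>x\<in>L. \<forall>y\<in>L. mul x y = mul y x) \<and>
     (\<forall>x\<in>L. mul x tp = x) \<and>
     (\<forall>x\<in>L. \<forall>y\<in>L. \<forall>z\<in>L. leq x y \<longrightarrow> leq (mul x z) (mul y z)) \<and>
     \<comment> \<open>residuation\<close>
     (\<forall>x\<in>L. \<forall>y\<in>L. \<forall>z\<in>L. leq z (res x y) \<longleftrightarrow> leq (mul x z) y)"

definition BL_algebra ::
  "'b set \<Rightarrow> ('b \<Rightarrow> 'b \<Rightarrow> bool) \<Rightarrow> ('b \<Rightarrow> 'b \<Rightarrow> 'b) \<Rightarrow> ('b \<Rightarrow> 'b \<Rightarrow> 'b) \<Rightarrow>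
   ('b \<Rightarrow> 'b \<Rightarrow> 'b) \<Rightarrow> ('b \<Rightarrow> 'b \<Rightarrow> 'b) \<Rightarrow> 'b \<Rightarrow> 'b \<Rightarrow> bool" where
  "BL_algebra L leq mt jn mul res bt tp \<longleftrightarrow>
     residuated_lattice L leq mt jn mul res bt tp \<and>
     (\<forall>x\<in>L. \<forall>y\<in>L. jn (res x y) (res y x) = tp) \<and>
     (\<forall>x\<in>L. \<forall>y\<in>L. mul x (res x y) = mt x y)"

definition MV_algebra ::
  "'b set \<Rightarrow> ('b \<Rightarrow> 'b \<Rightarrow> bool) \<Rightarrow> ('b \<Rightarrow> 'b \<Rightarrow> 'b) \<Rightarrow> ('b \<Rightarrow> 'b \<Rightarrow> 'b) \<Rightarrow>
   ('b \<Rightarrow> 'b \<Rightarrow> 'b) \<Rightarrow> ('b \<Rightarrow> 'b \<Rightarrow> 'b) \<Rightarrow> 'b \<Rightarrow> 'b \<Rightarrow> bool" where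
  "MV_algebra L leq mt jn mul res bt tp \<longleftrightarrow>
     BL_algebra L leq mt jn mul res bt tp \<and>
     (\<forall>x\<in>L. res (res x bt) bt = x)"

definition ideals :: "('a, 'c) ring_scheme \<Rightarrow> 'a set set" where
  "ideals R = {I. ideal I R}"

definition ideal_res :: "('a, 'c) ring_scheme \<Rightarrow> 'a set \<Rightarrow> 'a set \<Rightarrow> 'a set" where
  "ideal_res R I J = {x \<in> carrier R. \<forall>i\<in>I. x \<otimes>\<^bsub>R\<^esub> i \<in> J}"

end

theory Submission
  imports Defs
begin

text \<open>
  If the ideals of R are exactly 0, I and R, they form a chain, so the only idempotents of R
  are 0 and 1, and every nonzero element of I generates I. An element a of I with a^2 \<noteq> 0
  would then satisfy a = r a^2, making r a an idempotent that is neither 0 (as r a a = a)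
  nor 1 (as I is proper). Hence I^2 = 0, the annihilator I \<rightarrow> 0 is I itself, and the
  negation x \<mapsto> x \<rightarrow> 0 swaps 0 and R and fixes I, so it is an involution. The BL hypothesis
  is needed only for the BL part of the MV conclusion.
\<close>

lemma (in cring) ideal_res_ideal:
  assumes "I \<subseteq> carrier R" and "ideal J R"
  shows "ideal (ideal_res R I J) R"
proof -
  interpret J: ideal J R by fact
  have r_closed: "a \<otimes> x \<in> ideal_res R I J" if "a \<in> ideal_res R I J" "x \<in> carrier R" for a x
  proof -
    have "a \<otimes> x \<otimes> i = x \<otimes> (a \<otimes> i)" if "i \<in> I" for i
      using \<open>i \<in> I\<close> assms(1) \<open>a \<in> ideal_res R I J\<close> \<open>x \<in> carrier R\<close>
      by (auto simp: ideal_res_def m_comm m_lcomm)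
    then show ?thesis
      using that by (auto simp: ideal_res_def J.I_l_closed)
  qed
  show ?thesis
  proof (rule idealI[OF ring_axioms])
    show "subgroup (ideal_res R I J) (add_monoid R)"
      using assms(1)
      by (intro add.subgroupI) (auto simp: ideal_res_def l_distr l_minus subsetD intro!: exI[of _ \<zero>])
    show "x \<otimes> a \<in> ideal_res R I J" if "a \<in> ideal_res R I J" "x \<in> carrier R" for a x
      using r_closed[OF that] that by (simp add: ideal_res_def m_comm)
  qed (fact r_closed)
qed

lemma (in ring) ideal_res_zero_left:
  assumes "\<zero> \<in> J"
  shows "ideal_res R {\<zero>} J = carrier R"
  using assms by (auto simp: ideal_res_def)

lemma (in ring) ideal_res_carrier_left:
  assumes "ideal J R"
  shows "ideal_res R (carrier R) J = J"
proof -
  interpret J: ideal J R by fact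
  show ?thesis
    by (auto simp: ideal_res_def J.I_r_closed dest: bspec[of _ _ \<one>])
qed

lemma (in cring) idempotent_zero_if_in_cgenideal_of_annihilator:
  assumes "e \<in> carrier R" "f \<in> carrier R" "e \<otimes> e = e" "e \<otimes> f = \<zero>" "e \<in> PIdl f"
  shows "e = \<zero>"
proof -
  obtain s where s: "s \<in> carrier R" and e_eq: "e = s \<otimes> f"
    using assms(5) by (auto simp: cgenideal_def)
  have "e = s \<otimes> (e \<otimes> f)"
    using assms(1-3) s e_eq by (metis m_assoc m_comm)
  then show ?thesis
    using assms(4) s by simp
qed

lemma (in cring) idempotent_trivial_if_ideals_chain:
  assumes chain: "\<And>I J. ideal I R \<Longrightarrow> ideal J R \<Longrightarrow> I \<subseteq> J \<or> J \<subseteq> I"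
    and e: "e \<in> carrier R" "e \<otimes> e = e"
  shows "e = \<zero> \<or> e = \<one>"
proof -
  define f where "f = \<one> \<ominus> e"
  have f: "f \<in> carrier R" "f \<otimes> f = f" "e \<otimes> f = \<zero>" "f \<otimes> e = \<zero>"
    using e by (simp_all add: f_def a_minus_def l_distr r_distr l_minus r_minus r_neg)
  have "e \<in> PIdl f \<or> f \<in> PIdl e"
    using chain[OF cgenideal_ideal[OF e(1)] cgenideal_ideal[OF f(1)]]
      cgenideal_self[OF e(1)] cgenideal_self[OF f(1)] by blast
  then have "e = \<zero> \<or> f = \<zero>"
    using idempotent_zero_if_in_cgenideal_of_annihilator e f by blast
  moreover have "f = \<zero> \<Longrightarrow> e = \<one>"
    using e(1) sum_zero_eq_neg[of \<one> "\<ominus> e"] by (simp add: f_def a_minus_def)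
  ultimately show ?thesis
    by blast
qed

lemma (in cring) zero_or_unit_if_in_cgenideal_of_square:
  assumes idempotent_trivial: "\<And>e. e \<in> carrier R \<Longrightarrow> e \<otimes> e = e \<Longrightarrow> e = \<zero> \<or> e = \<one>"
    and a: "a \<in> carrier R" "a \<in> PIdl (a \<otimes> a)"
  shows "a = \<zero> \<or> a \<in> Units R"
proof -
  obtain r where r: "r \<in> carrier R" and a_eq: "a = r \<otimes> (a \<otimes> a)"
    using a(2) by (auto simp: cgenideal_def)
  have ra_a: "r \<otimes> a \<otimes> a = a"
    using m_assoc[OF r a(1) a(1)] a_eq by (rule trans[OF _ sym])
  have "r \<otimes> a \<otimes> (r \<otimes> a) = r \<otimes> (r \<otimes> a \<otimes> a)"
    using a(1) r by (simp add: m_ac)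
  also have "\<dots> = r \<otimes> a"
    by (simp only: ra_a)
  finally have "r \<otimes> a = \<zero> \<or> r \<otimes> a = \<one>"
    using idempotent_trivial[of "r \<otimes> a"] a(1) r by simp
  then show ?thesis
  proof
    assume "r \<otimes> a = \<zero>"
    then show ?thesis
      using ra_a a(1) by simp
  next
    assume ra: "r \<otimes> a = \<one>"
    then have "a \<otimes> r = \<one>"
      using a(1) r by (simp add: m_comm)
    then show ?thesis
      using ra a(1) r unfolding Units_def by blast
  qed
qed

lemma (in cring) square_zero_if_generated_by_each_nonzero_element:
  assumes idempotent_trivial: "\<And>e. e \<in> carrier R \<Longrightarrow> e \<otimes> e = e \<Longrightarrow> e = \<zero> \<or> e = \<one>"
    and "ideal I R" and proper: "I \<noteq> carrier R"
    and generated: "\<And>x. x \<in> I \<Longrightarrow> x \<noteq> \<zero> \<Longrightarrow> PIdl x = I"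
    and a: "a \<in> I" and b: "b \<in> I"
  shows "a \<otimes> b = \<zero>"
proof -
  interpret I: ideal I R by fact
  have square_zero: "c \<otimes> c = \<zero>" if c: "c \<in> I" for c
  proof (rule ccontr)
    assume nonzero: "c \<otimes> c \<noteq> \<zero>"
    have c_carrier: "c \<in> carrier R"
      using c by (rule I.Icarr)
    have "c \<in> PIdl (c \<otimes> c)"
      using generated[OF I.I_r_closed[OF c c_carrier] nonzero] c by simp
    then have "c = \<zero> \<or> c \<in> Units R"
      using zero_or_unit_if_in_cgenideal_of_square idempotent_trivial c_carrier by blast
    moreover have "c \<notin> Units R"
    proof
      assume unit: "c \<in> Units R"
      then have "inv c \<otimes> c \<in> I"
        using c by (simp add: I.I_l_closed del: Units_l_inv)
      then have "\<one> \<in> I"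
        using unit by simp
      then show False
        using proper I.one_imp_carrier by blast
    qed
    ultimately show False
      using nonzero c_carrier by auto
  qed
  show ?thesis
  proof (cases "a = \<zero>")
    case True
    then show ?thesis
      using I.Icarr[OF b] by simp
  next
    case False
    then obtain r where r: "r \<in> carrier R" and b_eq: "b = r \<otimes> a"
      using generated[OF a False] b by (auto simp: cgenideal_def)
    then have "a \<otimes> b = r \<otimes> (a \<otimes> a)"
      using I.Icarr[OF a] by (simp add: m_lcomm)
    then show ?thesis
      using square_zero[OF a] r by simp
  qed
qed

lemma (in ring) card_ideals_eq_3E:
  assumes "card (ideals R) = 3"
  obtains I where "ideals R = {{\<zero>}, I, carrier R}" "I \<noteq> {\<zero>}" "I \<noteq> carrier R"
proof -
  have trivial_ideals: "{\<zero>} \<in> ideals R" "carrier R \<in> ideals R"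
    by (simp_all add: ideals_def zeroideal oneideal)
  have "{\<zero>} \<noteq> carrier R"
  proof
    assume trivial: "{\<zero>} = carrier R"
    have "J = {\<zero>}" if "J \<in> ideals R" for J
    proof -
      have "additive_subgroup J R"
        using that by (simp add: ideals_def ideal.axioms(1))
      then have "J \<subseteq> carrier R" "\<zero> \<in> J"
        by (simp_all add: additive_subgroup.a_subset additive_subgroup.zero_closed)
      then show ?thesis
        using trivial by blast
    qed
    then have "card (ideals R) \<le> card {{\<zero>}}"
      by (intro card_mono) auto
    then show False
      using assms by simp
  qed
  moreover have "finite (ideals R)"
    using assms by (metis card.infinite zero_neq_numeral)
  ultimately have "card (ideals R - {{\<zero>}, carrier R}) = 1"
    using assms trivial_ideals by (subst card_Diff_subset) auto
  then obtain I where I: "ideals R - {{\<zero>}, carrier R} = {I}"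
    by (rule card_1_singletonE)
  then have "ideals R = {{\<zero>}, I, carrier R}"
    using trivial_ideals by blast
  moreover have "I \<noteq> {\<zero>}" "I \<noteq> carrier R"
    using I by blast+
  ultimately show thesis
    by (rule that)
qed

lemma (in cring) annihilator_eq_self_if_three_ideals:
  assumes ideals_eq: "ideals R = {{\<zero>}, I, carrier R}"
    and nonzero: "I \<noteq> {\<zero>}" and proper: "I \<noteq> carrier R"
  shows "ideal_res R I {\<zero>} = I"
proof -
  have ideal_cases: "J = {\<zero>} \<or> J = I \<or> J = carrier R" if "ideal J R" for J
    using that ideals_eq by (auto simp: ideals_def)
  have I: "ideal I R"
    using ideals_eq by (auto simp: ideals_def)
  then interpret I: ideal I R .
  have chain: "J \<subseteq> K \<or> K \<subseteq> J" if "ideal J R" "ideal K R" for J K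
    using ideal_cases[OF that(1)] ideal_cases[OF that(2)] that I.a_subset
    by (auto dest: additive_subgroup.zero_closed[OF ideal.axioms(1)])
  have generated: "PIdl x = I" if x: "x \<in> I" "x \<noteq> \<zero>" for x
  proof -
    have "PIdl x \<subseteq> I"
      using cgenideal_minimal[OF I x(1)] .
    moreover have "x \<in> PIdl x"
      using I.Icarr[OF x(1)] by (rule cgenideal_self)
    ultimately show ?thesis
      using ideal_cases[OF cgenideal_ideal[OF I.Icarr[OF x(1)]]] x(2) proper I.a_subset by auto
  qed
  have square_zero: "a \<otimes> b = \<zero>" if "a \<in> I" "b \<in> I" for a b
    by (rule square_zero_if_generated_by_each_nonzero_element
        [OF idempotent_trivial_if_ideals_chain[OF chain] I proper generated that])
  have "I \<subseteq> ideal_res R I {\<zero>}"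
    using square_zero I.a_subset by (auto simp: ideal_res_def)
  moreover have "\<one> \<notin> ideal_res R I {\<zero>}"
    using nonzero I.a_subset by (auto simp: ideal_res_def)
  moreover have "ideal (ideal_res R I {\<zero>}) R"
    using I.a_subset zeroideal by (rule ideal_res_ideal)
  then consider "ideal_res R I {\<zero>} = {\<zero>}" | "ideal_res R I {\<zero>} = I"
    | "ideal_res R I {\<zero>} = carrier R"
    using ideal_cases by blast
  ultimately show ?thesis
    using nonzero I.zero_closed by (cases) auto
qed

theorem proposition3p1:
  fixes R :: "('a, 'c) ring_scheme"
  assumes "cring R"
    and "card (ideals R) = 3"
    and "BL_algebra (ideals R) (\<subseteq>) (\<inter>) (set_add R) (ideal_prod R) (ideal_res R)
           {\<zero>\<^bsub>R\<^esub>} (carrier R)"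
  shows "MV_algebra (ideals R) (\<subseteq>) (\<inter>) (set_add R) (ideal_prod R) (ideal_res R)
           {\<zero>\<^bsub>R\<^esub>} (carrier R)"
proof -
  interpret cring R by fact
  obtain I where ideals_eq: "ideals R = {{\<zero>\<^bsub>R\<^esub>}, I, carrier R}"
    and "I \<noteq> {\<zero>\<^bsub>R\<^esub>}" "I \<noteq> carrier R"
    using assms(2) by (rule card_ideals_eq_3E)
  then have "ideal_res R I {\<zero>\<^bsub>R\<^esub>} = I"
    by (rule annihilator_eq_self_if_three_ideals)
  moreover have "ideal_res R {\<zero>\<^bsub>R\<^esub>} {\<zero>\<^bsub>R\<^esub>} = carrier R"
    by (simp add: ideal_res_zero_left)
  moreover have "ideal_res R (carrier R) {\<zero>\<^bsub>R\<^esub>} = {\<zero>\<^bsub>R\<^esub>}"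
    using zeroideal by (rule ideal_res_carrier_left)
  ultimately show ?thesis
    using assms(3) by (auto simp: MV_algebra_def ideals_eq)
qed

end
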